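(* Let $\theta$ be a nonnegative real number. Then there exists an infinite word $\mathbf{w}$ such that $\mathcal{A}(\mathbf{w}) = \theta$, where $\mathcal{A}$ denotes the abelian critical exponent. Moreover, $\mathbf{w}$ can be taken over an alphabet of at most three letters.
   Context: For a finite word $u$ and a letter (or word) $a$, $|u|_a$ denotes the number of occurrences of $a$ in $u$ as a factor. Two finite words $u,v$ are abelian equivalent, written $u\sim v$, if they are permutations of each other. An abelian power of exponent $e$ (a positive integer) and period $m$ is a word of the form $u_0u_1\cdots u_{e-1}$ where $u_0,\dots,u_{e-1}$ are nonempty, pairwise abelian equivalent, and $m=|u_0|$. For an infinite word $\mathbf{w}$ and a positive integer $m$, let $A_{\mathbf{w}}(m)$ be the supremum of the exponents of abelian powers of period $m$ occurring (as factors) in $\mathbf{w}$. The abelian critical exponent of $\mathbf{w}$ is $\mathcal{A}(\mathbf{w}) = \limsup_{m\to\infty} A_{\mathbf{w}}(m)/m$ (a value in $[0,\infty]$). *)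

theory Defs
  imports "HOL-Analysis.Analysis" "HOL-Library.Multiset"
begin

definition factor :: "(nat \<Rightarrow> 'a) \<Rightarrow> nat \<Rightarrow> nat \<Rightarrow> 'a list" where
  "factor w i n = map w [i..<i+n]"

definition abelian_equiv :: "'a list \<Rightarrow> 'a list \<Rightarrow> bool" where
  "abelian_equiv u v \<longleftrightarrow> mset u = mset v"

definition has_abelian_power :: "(nat \<Rightarrow> 'a) \<Rightarrow> nat \<Rightarrow> nat \<Rightarrow> bool" where
  "has_abelian_power w m e \<longleftrightarrow> 0 < m \<and> 0 < e \<and>
     (\<exists>i. \<forall>j<e. \<forall>k<e. abelian_equiv (factor w (i + j*m) m) (factor w (i + k*m) m))"

definition abelian_period_exp :: "(nat \<Rightarrow> 'a) \<Rightarrow> nat \<Rightarrow> ereal" where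
  "abelian_period_exp w m = (SUP e \<in> {e. has_abelian_power w m e}. ereal (real e))"

definition abelian_critical_exponent :: "(nat \<Rightarrow> 'a) \<Rightarrow> ereal" where
  "abelian_critical_exponent w = limsup (\<lambda>m. abelian_period_exp w m / ereal (real m))"

end

theory Submission
  imports Defs "HOL-Number_Theory.Cong" "HOL-Real_Asymp.Real_Asymp"
begin

(* Fix a prime m and slopes p, r < m, and interleave the mechanical word of slope p/m (letters 0, 1,
   at even positions) with that of slope r/m (letters 0, 2, at odd positions); the result has period
   2m. In an abelian power of period M and exponent n of this word the numbers of 1s and of 2s per
   block are constant, which turns floor((x + t M) p / m) and floor((x + t M) r / m) into arithmetic
   progressions; this forces n/2 < m / d(M p) and n/2 < m / d(M r), d(y) denoting the distance from y
   to the nearest multiple of m. A counting argument yields p (odd) and r with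
   max (d(K p), d(K r)) >= m / (8 K^(3/4)) for all 0 < K < m, so that n = O(M^(3/4)) unless 2m
   divides M (if only m does, M p / m is odd and the 1s cannot split evenly).
   The word is a concatenation of regions, the j-th consisting of about 2 theta m_j periods of such a
   word whose modulus m_j exceeds the length of all previous regions. Region j contains an abelian
   power of period 2 m_j and exponent about 2 theta m_j, so the limsup is at least theta. Conversely
   the regions grow so fast that an abelian power meets essentially only the last two regions it
   touches, which bounds its exponent by theta M + O(M^(3/4)). *)

section \<open>Factors and abelian powers\<close>

lemma count_factor_Suc:
  "count (mset (factor w s (Suc L))) a = count (mset (factor w s L)) a + (if w (s + L) = a then 1 else 0)"
  unfolding factor_def by simp

lemma factor_conv_map: "factor w s L = map (\<lambda>t. w (s + t)) [0..<L]"
  unfolding factor_def by (simp add: map_add_upt[symmetric] comp_def add.commute)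

lemma periodic_add_mult:
  fixes d k x :: nat
  assumes "\<And>x. f (x + d) = f x"
  shows "f (x + k * d) = f x"
proof (induction k)
  case (Suc k)
  have "f (x + Suc k * d) = f ((x + k * d) + d)"
    by (simp add: algebra_simps)
  also have "\<dots> = f (x + k * d)"
    by (rule assms)
  finally show ?case
    using Suc.IH by simp
qed simp

definition abelian_power_at :: "(nat \<Rightarrow> 'a) \<Rightarrow> nat \<Rightarrow> nat \<Rightarrow> nat \<Rightarrow> bool" where
  "abelian_power_at w i m e \<longleftrightarrow>
     (\<forall>j<e. \<forall>k<e. abelian_equiv (factor w (i + j * m) m) (factor w (i + k * m) m))"

lemma has_abelian_power_iff:
  "has_abelian_power w m e \<longleftrightarrow> 0 < m \<and> 0 < e \<and> (\<exists>i. abelian_power_at w i m e)"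
  unfolding has_abelian_power_def abelian_power_at_def ..

lemma abelian_power_at_count:
  assumes "abelian_power_at w i m e" "k < e"
  shows "count (mset (factor w (i + k * m) m)) a = count (mset (factor w i m)) a"
  using assms unfolding abelian_power_at_def abelian_equiv_def
  by (metis add.right_neutral gr_implies_not0 mult_0 neq0_conv)

lemma abelian_power_at_subrange:
  assumes "abelian_power_at w i m e" "ka \<le> kb" "kb \<le> e"
  shows "abelian_power_at w (i + ka * m) m (kb - ka)"
  unfolding abelian_power_at_def
proof (intro allI impI)
  fix j k
  assume "j < kb - ka" "k < kb - ka"
  then have "abelian_equiv (factor w (i + (ka + j) * m) m) (factor w (i + (ka + k) * m) m)"
    using assms unfolding abelian_power_at_def by auto
  then show "abelian_equiv (factor w (i + ka * m + j * m) m) (factor w (i + ka * m + k * m) m)"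
    by (simp add: algebra_simps)
qed

lemma abelian_power_at_cong:
  assumes "\<And>k. k < e \<Longrightarrow> factor w (i + k * m) m = factor v (i + k * m) m"
  shows "abelian_power_at w i m e \<longleftrightarrow> abelian_power_at v i m e"
  using assms unfolding abelian_power_at_def by simp

section \<open>Interleaved mechanical words\<close>

(* mech_count m q x = floor(x q / m) is the number of 1s among the first x letters of the lower
   mechanical word of slope q / m; mech_letter m q is that word itself. *)
definition mech_count :: "nat \<Rightarrow> nat \<Rightarrow> nat \<Rightarrow> nat" where
  "mech_count m q x = x * q div m"

definition mech_letter :: "nat \<Rightarrow> nat \<Rightarrow> nat \<Rightarrow> nat" where
  "mech_letter m q y = mech_count m q (Suc y) - mech_count m q y"

definition interleaved_word :: "nat \<Rightarrow> nat \<Rightarrow> nat \<Rightarrow> nat \<Rightarrow> nat" where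
  "interleaved_word m p r x =
     (if even x then mech_letter m p (x div 2) else 2 * mech_letter m r (x div 2))"

lemma mech_count_mono: "x \<le> y \<Longrightarrow> mech_count m q x \<le> mech_count m q y"
  unfolding mech_count_def by (simp add: div_le_mono)

lemma mech_count_Suc_le:
  assumes "q \<le> m"
  shows "mech_count m q (Suc x) \<le> Suc (mech_count m q x)"
proof -
  have "(x * q + q) div m \<le> (x * q + m) div m"
    using assms by (simp add: div_le_mono)
  also have "\<dots> \<le> Suc (x * q div m)"
    by (cases "m = 0") simp_all
  finally show ?thesis
    unfolding mech_count_def by (simp add: add.commute)
qed

lemma mech_count_Suc_cases:
  assumes "q \<le> m"
  shows "mech_count m q (Suc x) = mech_count m q x \<or> mech_count m q (Suc x) = Suc (mech_count m q x)"
  using mech_count_Suc_le[OF assms, of x] mech_count_mono[of x "Suc x" m q] by linarith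

lemma mech_letter_le_1: "q \<le> m \<Longrightarrow> mech_letter m q y \<le> 1"
  using mech_count_Suc_le[of q m y] unfolding mech_letter_def by simp

lemma mech_count_add_period: "0 < m \<Longrightarrow> mech_count m q (x + m) = mech_count m q x + q"
  unfolding mech_count_def by (simp add: algebra_simps)

lemma interleaved_word_range:
  "p \<le> m \<Longrightarrow> r \<le> m \<Longrightarrow> interleaved_word m p r x \<in> {0, 1, 2}"
  using mech_letter_le_1[of p m "x div 2"] mech_letter_le_1[of r m "x div 2"]
  unfolding interleaved_word_def by (auto simp: le_Suc_eq)

lemma interleaved_word_periodic:
  assumes "0 < m"
  shows "interleaved_word m p r (x + 2 * m) = interleaved_word m p r x"
proof -
  have "mech_letter m q (y + m) = mech_letter m q y" for q y
    using mech_count_add_period[OF assms, of q y] mech_count_add_period[OF assms, of q "Suc y"]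
    unfolding mech_letter_def by simp
  moreover have "(x + 2 * m) div 2 = x div 2 + m" "even (x + 2 * m) = even x"
    by simp_all
  ultimately show ?thesis
    unfolding interleaved_word_def by (simp only:)
qed

lemma count_factor_interleaved_word_1:
  assumes "p \<le> m"
  shows "count (mset (factor (interleaved_word m p r) s L)) 1
           = mech_count m p ((s + L + 1) div 2) - mech_count m p ((s + 1) div 2)"
proof (induction L)
  case 0
  then show ?case by (simp add: factor_def)
next
  case (Suc L)
  let ?c = "mech_count m p" and ?y = "(s + L) div 2" and ?x = "(s + 1) div 2"
  have mono: "?c ?x \<le> ?c ((s + L + 1) div 2)"
    by (rule mech_count_mono) simp
  show ?case
  proof (cases "even (s + L)")
    case True
    then have "(s + Suc L + 1) div 2 = Suc ?y" "(s + L + 1) div 2 = ?y"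
      by presburger+
    moreover have "interleaved_word m p r (s + L) = ?c (Suc ?y) - ?c ?y"
      using True unfolding interleaved_word_def mech_letter_def by simp
    ultimately show ?thesis
      using Suc.IH mono mech_count_Suc_cases[OF assms, of ?y]
      unfolding count_factor_Suc by (auto simp: Suc_diff_le)
  next
    case False
    then have "(s + Suc L + 1) div 2 = (s + L + 1) div 2"
      by presburger
    moreover have "interleaved_word m p r (s + L) \<noteq> 1"
      using False unfolding interleaved_word_def by simp
    ultimately show ?thesis
      using Suc.IH unfolding count_factor_Suc by simp
  qed
qed

lemma count_factor_interleaved_word_2:
  assumes "p \<le> m" "r \<le> m"
  shows "count (mset (factor (interleaved_word m p r) s L)) 2
           = mech_count m r ((s + L) div 2) - mech_count m r (s div 2)"
proof (induction L)
  case 0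
  then show ?case by (simp add: factor_def)
next
  case (Suc L)
  let ?c = "mech_count m r" and ?y = "(s + L) div 2"
  have mono: "?c (s div 2) \<le> ?c ?y"
    by (rule mech_count_mono) simp
  show ?case
  proof (cases "even (s + L)")
    case True
    then have "(s + Suc L) div 2 = ?y"
      by presburger
    moreover have "interleaved_word m p r (s + L) \<noteq> 2"
      using True mech_letter_le_1[OF assms(1), of ?y] unfolding interleaved_word_def by simp
    ultimately show ?thesis
      using Suc.IH unfolding count_factor_Suc by simp
  next
    case False
    then have "(s + Suc L) div 2 = Suc ?y"
      by presburger
    moreover have "interleaved_word m p r (s + L) = 2 * (?c (Suc ?y) - ?c ?y)"
      using False unfolding interleaved_word_def mech_letter_def by simp
    ultimately show ?thesis
      using Suc.IH mono mech_count_Suc_cases[OF assms(2), of ?y]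
      unfolding count_factor_Suc by (auto simp: Suc_diff_le)
  qed
qed

definition dist_mult :: "nat \<Rightarrow> nat \<Rightarrow> nat" where
  "dist_mult m x = min (x mod m) (m - x mod m)"

lemma dist_mult_mod: "dist_mult m (x mod m) = dist_mult m x"
  unfolding dist_mult_def by simp

lemma div_progression_dist_mult_bound:
  fixes m q x M k T :: nat
  assumes m: "0 < m" and T: "1 \<le> T"
    and progression: "\<forall>t\<le>T. (x + t * M) * q div m = x * q div m + t * k"
  shows "T * dist_mult m (M * q) < m"
proof -
  define a where "a = x * q div m"
  define b where "b = M * q div m"
  define u where "u = x * q mod m"
  define \<rho> where "\<rho> = M * q mod m"
  have expand: "(x + t * M) * q div m = a + t * b + (u + t * \<rho>) div m" for t
  proof -
    have xq: "x * q = a * m + u" and Mq: "M * q = b * m + \<rho>"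
      unfolding a_def b_def u_def \<rho>_def by simp_all
    have "(x + t * M) * q = x * q + t * (M * q)"
      by (simp add: algebra_simps)
    also have "\<dots> = (u + t * \<rho>) + (a + t * b) * m"
      unfolding xq Mq by (simp add: algebra_simps)
    finally show ?thesis using m by simp
  qed
  have u: "u < m" and \<rho>: "\<rho> < m"
    using m by (auto simp: u_def \<rho>_def)
  define carry where "carry = (u + \<rho>) div m"
  have "u + \<rho> < 2 * m"
    using u \<rho> by simp
  then have carry_le: "carry \<le> 1"
    using less_mult_imp_div_less[of "u + \<rho>" 2 m] unfolding carry_def by simp
  have "k = b + carry"
    using progression[rule_format, of 1] expand[of 1] T unfolding carry_def a_def by simp
  \<comment> \<open>the residues u + t * \<rho> wrap around m either at every step or at none\<close>
  then have carries: "(u + T * \<rho>) div m = T * carry"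
    using progression[rule_format, of T] expand[of T] unfolding a_def by (simp add: algebra_simps)
  show ?thesis
  proof (cases "carry = 0")
    case True
    then have "T * \<rho> < m"
      using carries m by (simp add: div_eq_0_iff)
    moreover have "dist_mult m (M * q) \<le> \<rho>"
      unfolding dist_mult_def \<rho>_def by simp
    ultimately show ?thesis
      by (meson le_less_trans mult_le_mono2)
  next
    case False
    then have "(u + T * \<rho>) div m = T"
      using carries carry_le by simp
    then have "T * m \<le> u + T * \<rho>"
      by (metis div_times_less_eq_dividend mult.commute)
    then have "T * (m - \<rho>) < m"
      using u by (simp add: diff_mult_distrib2)
    moreover have "dist_mult m (M * q) \<le> m - \<rho>"
      unfolding dist_mult_def \<rho>_def by simp
    ultimately show ?thesis
      by (meson le_less_trans mult_le_mono2)
  qed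
qed

lemma constant_increments_progression:
  fixes G z :: "nat \<Rightarrow> nat"
  assumes inc: "\<And>k. k < n \<Longrightarrow> G (z (Suc k)) = G (z k) + c"
    and z: "\<And>k. z (Suc (Suc k)) = z k + M"
    and "2 * t \<le> n"
  shows "G (z 0 + t * M) = G (z 0) + t * (2 * c)"
  using \<open>2 * t \<le> n\<close>
proof (induction t)
  case 0
  then show ?case by simp
next
  case (Suc t)
  have "z (2 * t) = z 0 + t * M" for t
    using z by (induction t) (auto simp: algebra_simps)
  then have "z 0 + Suc t * M = z (Suc (Suc (2 * t)))" "z 0 + t * M = z (2 * t)"
    using z by auto
  then show ?case
    using Suc inc by (auto simp: algebra_simps)
qed

lemma mech_count_constant_increments:
  assumes m: "0 < m" and n: "2 \<le> n"
    and inc: "\<And>k. k < n \<Longrightarrow> mech_count m q (z (Suc k)) = mech_count m q (z k) + c"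
    and z: "\<And>k. z (Suc (Suc k)) = z k + M"
  shows "n div 2 * dist_mult m (M * q) < m"
    and "m dvd M \<Longrightarrow> 2 * c = M div m * q"
proof -
  have progression: "mech_count m q (z 0 + t * M) = mech_count m q (z 0) + t * (2 * c)"
    if "2 * t \<le> n" for t
    using constant_increments_progression[where G = "mech_count m q" and z = z, OF inc z that] .
  show "n div 2 * dist_mult m (M * q) < m"
    using n progression
    by (intro div_progression_dist_mult_bound[OF m, where x = "z 0" and k = "2 * c"])
      (auto simp: mech_count_def)
  assume "m dvd M"
  then obtain j where "M = m * j" ..
  then have "(z 0 + M) * q = z 0 * q + (M div m * q) * m"
    using m by (simp add: algebra_simps)
  then have "mech_count m q (z 0 + M) = mech_count m q (z 0) + M div m * q"
    using m unfolding mech_count_def by simp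
  then show "2 * c = M div m * q"
    using progression[of 1] n by simp
qed

lemma interleaved_power_increments:
  assumes "p \<le> m" "r \<le> m" and pw: "abelian_power_at (interleaved_word m p r) s M n" and "k < n"
  defines "w \<equiv> interleaved_word m p r"
  shows "mech_count m p ((s + Suc k * M + 1) div 2)
           = mech_count m p ((s + k * M + 1) div 2) + count (mset (factor w s M)) 1"
    and "mech_count m r ((s + Suc k * M) div 2)
           = mech_count m r ((s + k * M) div 2) + count (mset (factor w s M)) 2"
proof -
  have "count (mset (factor w (s + k * M) M)) a = count (mset (factor w s M)) a" for a
    using abelian_power_at_count[OF pw \<open>k < n\<close>] unfolding w_def .
  moreover have
    "count (mset (factor w (s + k * M) M)) 1
       = mech_count m p ((s + Suc k * M + 1) div 2) - mech_count m p ((s + k * M + 1) div 2)"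
    "count (mset (factor w (s + k * M) M)) 2
       = mech_count m r ((s + Suc k * M) div 2) - mech_count m r ((s + k * M) div 2)"
    using count_factor_interleaved_word_1[OF assms(1), of r "s + k * M" M]
      count_factor_interleaved_word_2[OF assms(1,2), of "s + k * M" M]
    unfolding w_def by (simp_all add: add.commute add.left_commute)
  moreover have
    "mech_count m p ((s + k * M + 1) div 2) \<le> mech_count m p ((s + Suc k * M + 1) div 2)"
    "mech_count m r ((s + k * M) div 2) \<le> mech_count m r ((s + Suc k * M) div 2)"
    by (intro mech_count_mono; simp)+
  ultimately show
    "mech_count m p ((s + Suc k * M + 1) div 2)
       = mech_count m p ((s + k * M + 1) div 2) + count (mset (factor w s M)) 1"
    "mech_count m r ((s + Suc k * M) div 2)
       = mech_count m r ((s + k * M) div 2) + count (mset (factor w s M)) 2"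
    by simp_all
qed

lemma interleaved_power_dist_mult_bounds:
  assumes m: "0 < m" and "p \<le> m" "r \<le> m" and n: "2 \<le> n"
    and pw: "abelian_power_at (interleaved_word m p r) s M n"
  shows "n div 2 * dist_mult m (M * p) < m"
    and "n div 2 * dist_mult m (M * r) < m"
    and "m dvd M \<Longrightarrow> even (M div m * p)"
proof -
  note inc = interleaved_power_increments[OF assms(2,3) pw]
  have shift: "(x + 2 * M) div 2 = x div 2 + M" for x
    by simp
  have shift_p: "(s + Suc (Suc k) * M + 1) div 2 = (s + k * M + 1) div 2 + M"
    and shift_r: "(s + Suc (Suc k) * M) div 2 = (s + k * M) div 2 + M" for k
    using shift[of "s + k * M + 1"] shift[of "s + k * M"] by (simp_all add: algebra_simps)
  note progression_p = mech_count_constant_increments[where z = "\<lambda>k. (s + k * M + 1) div 2",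
      OF m n _ shift_p]
  note progression_r = mech_count_constant_increments[where z = "\<lambda>k. (s + k * M) div 2",
      OF m n _ shift_r]
  show "n div 2 * dist_mult m (M * p) < m"
    by (rule progression_p(1)) (rule inc(1))
  show "n div 2 * dist_mult m (M * r) < m"
    by (rule progression_r(1)) (rule inc(2))
  show "even (M div m * p)" if "m dvd M"
  proof -
    have "2 * count (mset (factor (interleaved_word m p r) s M)) 1 = M div m * p"
      by (rule progression_p(2)[OF _ that]) (rule inc(1))
    then show ?thesis
      by (metis dvd_triv_left)
  qed
qed

definition good_slopes :: "nat \<Rightarrow> nat \<Rightarrow> nat \<Rightarrow> bool" where
  "good_slopes m p r \<longleftrightarrow> prime m \<and> odd p \<and> p < m \<and> r < m \<and>
     (\<forall>K\<in>{1..<m}. real m / (8 * real K powr (3/4))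
                    \<le> real (max (dist_mult m (K * p)) (dist_mult m (K * r))))"

lemma interleaved_word_power_bound:
  assumes good: "good_slopes m p r" and M: "\<not> 2 * m dvd M"
    and pw: "abelian_power_at (interleaved_word m p r) s M n"
  shows "real n \<le> 16 * real M powr (3/4) + 1"
proof (cases "n < 2")
  case True
  moreover have "0 \<le> real M powr (3/4)"
    by simp
  ultimately show ?thesis
    by linarith
next
  case False
  have m: "0 < m" and p: "p < m" "odd p" and r: "r < m"
    using good prime_gt_0_nat unfolding good_slopes_def by auto
  note bounds = interleaved_power_dist_mult_bounds[OF m less_imp_le[OF p(1)] less_imp_le[OF r] _ pw]
  have "\<not> m dvd M"
  proof
    assume "m dvd M"
    then obtain j where "M = m * j" ..
    with M m have "odd (M div m)"
      by auto
    then show False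
      using bounds(3)[OF _ \<open>m dvd M\<close>] False p(2) by simp
  qed
  define K where "K = M mod m"
  have K: "K \<in> {1..<m}" "K \<le> M"
    using \<open>\<not> m dvd M\<close> m unfolding K_def by (auto simp: dvd_eq_mod_eq_0)
  have "dist_mult m (M * q) = dist_mult m (K * q)" for q
    by (metis K_def dist_mult_mod mod_mult_left_eq)
  then have "n div 2 * max (dist_mult m (K * p)) (dist_mult m (K * r)) < m"
    using bounds(1,2) False by (simp add: max_def)
  then have "real (n div 2) * real (max (dist_mult m (K * p)) (dist_mult m (K * r))) < real m"
    by (metis of_nat_less_iff of_nat_mult)
  moreover have "real m / (8 * real K powr (3/4)) \<le> real (max (dist_mult m (K * p)) (dist_mult m (K * r)))"
    using good K(1) unfolding good_slopes_def by blast
  ultimately have "real (n div 2) * (real m / (8 * real K powr (3/4))) < real m"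
    by (meson le_less_trans mult_left_mono of_nat_0_le_iff)
  then have "real (n div 2) < 8 * real K powr (3/4)"
    using m K(1) by (simp add: field_simps)
  moreover have "real K powr (3/4) \<le> real M powr (3/4)"
    using K(2) by (simp add: powr_mono2)
  moreover have "real n \<le> 2 * real (n div 2) + 1"
    by linarith
  ultimately show ?thesis
    by linarith
qed

section \<open>Existence of good slopes\<close>

lemma card_less_real_le:
  fixes \<beta> :: real
  assumes "0 \<le> \<beta>"
  shows "real (card {x::nat. x < m \<and> real x < \<beta>}) \<le> \<beta> + 1"
proof -
  have "{x::nat. x < m \<and> real x < \<beta>} \<subseteq> {..<nat \<lceil>\<beta>\<rceil>}"
    by (auto simp: less_ceiling_iff zless_nat_eq_int_zless)
  then have "card {x::nat. x < m \<and> real x < \<beta>} \<le> nat \<lceil>\<beta>\<rceil>"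
    by (metis card_lessThan card_mono finite_lessThan)
  moreover have "real (nat \<lceil>\<beta>\<rceil>) \<le> \<beta> + 1"
    using assms by linarith
  ultimately show ?thesis
    by linarith
qed

lemma card_dist_mult_less:
  fixes \<beta> :: real
  assumes "0 \<le> \<beta>"
  shows "real (card {x::nat. x < m \<and> real (dist_mult m x) < \<beta>}) \<le> 2 * \<beta> + 2"
proof -
  let ?A = "{x::nat. x < m \<and> real x < \<beta>}"
  let ?B = "{x::nat. x < m \<and> real (m - x) < \<beta>}"
  have "card ?B \<le> card {y::nat. y < Suc m \<and> real y < \<beta>}"
    by (rule card_inj_on_le[where f = "\<lambda>x. m - x"]) (auto simp: inj_on_def)
  then have B: "real (card ?B) \<le> \<beta> + 1"
    using card_less_real_le[OF assms, of "Suc m"] by linarith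
  have "{x::nat. x < m \<and> real (dist_mult m x) < \<beta>} \<subseteq> ?A \<union> ?B"
    unfolding dist_mult_def by (auto simp: min_def split: if_splits)
  then have "card {x::nat. x < m \<and> real (dist_mult m x) < \<beta>} \<le> card (?A \<union> ?B)"
    by (intro card_mono) auto
  also have "\<dots> \<le> card ?A + card ?B"
    by (rule card_Un_le)
  finally have "card {x::nat. x < m \<and> real (dist_mult m x) < \<beta>} \<le> card ?A + card ?B" .
  then show ?thesis
    using B card_less_real_le[OF assms, of m] by linarith
qed

lemma inj_on_mult_mod_prime:
  fixes m K :: nat
  assumes "prime m" "K \<in> {1..<m}"
  shows "inj_on (\<lambda>x. K * x mod m) {..<m}"
proof (rule inj_onI)
  fix x y assume "x \<in> {..<m}" "y \<in> {..<m}" and "K * x mod m = K * y mod m"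
  moreover have "\<not> m dvd K"
    using assms by (auto dest: dvd_imp_le)
  then have "coprime K m"
    using prime_imp_coprime[OF assms(1)] coprime_commute by blast
  ultimately show "x = y"
    by (metis cong_def cong_less_modulus_unique_nat cong_mult_lcancel_nat lessThan_iff)
qed

lemma card_dist_mult_mult_less:
  fixes \<beta> :: real
  assumes "prime m" "K \<in> {1..<m}" "0 \<le> \<beta>" and f: "inj_on f S" "f ` S \<subseteq> {..<m}"
  shows "real (card {t \<in> S. real (dist_mult m (K * f t)) < \<beta>}) \<le> 2 * \<beta> + 2"
proof -
  have "card {t \<in> S. real (dist_mult m (K * f t)) < \<beta>}
          \<le> card {x::nat. x < m \<and> real (dist_mult m x) < \<beta>}"
  proof (rule card_inj_on_le[where f = "\<lambda>t. K * f t mod m"])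
    show "inj_on (\<lambda>t. K * f t mod m) {t \<in> S. real (dist_mult m (K * f t)) < \<beta>}"
      using inj_on_mult_mod_prime[OF assms(1,2)] f
      by (auto simp: inj_on_def image_subset_iff)
    show "(\<lambda>t. K * f t mod m) ` {t \<in> S. real (dist_mult m (K * f t)) < \<beta>}
            \<subseteq> {x. x < m \<and> real (dist_mult m x) < \<beta>}"
      using assms(1) prime_gt_0_nat by (auto simp: dist_mult_mod)
  qed simp
  then show ?thesis
    using card_dist_mult_less[OF assms(3), of m] by linarith
qed

lemma inverse_three_halves_telescoping:
  assumes "1 \<le> n"
  shows "1 / (real (Suc n) * sqrt (real (Suc n))) \<le> 2 / sqrt (real n) - 2 / sqrt (real (Suc n))"
proof -
  define a where "a = sqrt (real n)"
  define b where "b = sqrt (real (Suc n))"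
  have a: "0 < a" and ab: "a < b"
    using assms unfolding a_def b_def by simp_all
  have "(b - a) * (a + b) = 1"
    using assms unfolding a_def b_def by (simp add: algebra_simps)
  then have "b - a = 1 / (a + b)"
    using a ab by (simp add: field_simps)
  moreover have "2 / a - 2 / b = 2 * (b - a) / (a * b)"
    using a ab by (simp add: field_simps)
  ultimately have difference: "2 / a - 2 / b = 2 / (a * b * (a + b))"
    by simp
  have "a * b * (a + b) \<le> b * b * (b + b)"
    using a ab by (intro mult_mono add_mono) auto
  then have "2 / (b * b * (b + b)) \<le> 2 / (a * b * (a + b))"
    using a ab by (intro divide_left_mono) auto
  moreover have "1 / (b * b * b) = 2 / (b * b * (b + b))"
    using a ab by (simp add: field_simps)
  moreover have "real (Suc n) * sqrt (real (Suc n)) = b * b * b"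
    unfolding b_def by simp
  ultimately show ?thesis
    using difference by (simp add: a_def b_def)
qed

lemma sum_inverse_three_halves_le: "(\<Sum>K=1..n. 1 / (real K * sqrt (real K))) \<le> 3"
proof -
  have bound: "(\<Sum>K=1..n. 1 / (real K * sqrt (real K))) \<le> 3 - 2 / sqrt (real n)" if "1 \<le> n"
    using that
  proof (induction n rule: dec_induct)
    case base
    then show ?case by simp
  next
    case (step n)
    then show ?case
      using inverse_three_halves_telescoping[OF step.hyps(1)] by simp
  qed
  show ?thesis
  proof (cases "n = 0")
    case False
    moreover have "0 \<le> 2 / sqrt (real n)"
      by simp
    ultimately show ?thesis
      using bound by linarith
  qed simp
qed

lemma powr_three_quarters_squared: "(real K powr (3/4))\<^sup>2 = real K * sqrt (real K)"
proof (cases "K = 0")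
  case False
  then have "(real K powr (3/4))\<^sup>2 = real K powr (1 + 1/2)"
    by (simp add: powr_power)
  also have "\<dots> = real K powr 1 * real K powr (1/2)"
    by (rule powr_add)
  also have "\<dots> = real K * sqrt (real K)"
    using False by (simp add: powr_half_sqrt)
  finally show ?thesis .
qed simp

lemma sum_threshold_squares_le:
  assumes "1 \<le> m"
  shows "(\<Sum>K\<in>{1..<m}. (2 * (real m / (8 * real K powr (3/4))) + 2)\<^sup>2)
           \<le> 3 * (real m)\<^sup>2 / 8 + 8 * real m"
proof -
  have term_le: "(2 * (real m / (8 * real K powr (3/4))) + 2)\<^sup>2
          \<le> (real m)\<^sup>2 / 8 * (1 / (real K * sqrt (real K))) + 8" for K
  proof -
    define \<beta> where "\<beta> = real m / (8 * real K powr (3/4))"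
    have "8 * \<beta>\<^sup>2 = (real m)\<^sup>2 / 8 * (1 / (real K * sqrt (real K)))"
      unfolding \<beta>_def power_divide by (simp add: power_mult_distrib powr_three_quarters_squared)
    moreover have "(2 * \<beta> + 2)\<^sup>2 \<le> 8 * \<beta>\<^sup>2 + 8"
      using zero_le_power2[of "\<beta> - 1"] by (simp add: power2_eq_square algebra_simps)
    ultimately show ?thesis
      unfolding \<beta>_def by linarith
  qed
  have "{1..<m} = {1..m-1}"
    using assms by auto
  then have "(\<Sum>K\<in>{1..<m}. (real m)\<^sup>2 / 8 * (1 / (real K * sqrt (real K))) + 8)
               = (real m)\<^sup>2 / 8 * (\<Sum>K=1..m-1. 1 / (real K * sqrt (real K))) + 8 * real (m - 1)"
    by (simp add: sum.distrib sum_distrib_left)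
  moreover have "(\<Sum>K\<in>{1..<m}. (2 * (real m / (8 * real K powr (3/4))) + 2)\<^sup>2)
                   \<le> (\<Sum>K\<in>{1..<m}. (real m)\<^sup>2 / 8 * (1 / (real K * sqrt (real K))) + 8)"
    by (rule sum_mono) (rule term_le)
  ultimately have "(\<Sum>K\<in>{1..<m}. (2 * (real m / (8 * real K powr (3/4))) + 2)\<^sup>2)
               \<le> (real m)\<^sup>2 / 8 * (\<Sum>K=1..m-1. 1 / (real K * sqrt (real K))) + 8 * real (m - 1)"
    by simp
  also have "\<dots> \<le> (real m)\<^sup>2 / 8 * 3 + 8 * real m"
    using sum_inverse_three_halves_le[of "m - 1"] by (intro add_mono mult_left_mono) auto
  finally show ?thesis
    by simp
qed

(* t encodes the odd slope p = 2 t + 1 *)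
definition bad_slope_pairs :: "nat \<Rightarrow> (nat \<times> nat) set" where
  "bad_slope_pairs m = (\<Union>K\<in>{1..<m}.
     {t \<in> {..<m div 2}. real (dist_mult m (K * (2 * t + 1))) < real m / (8 * real K powr (3/4))}
     \<times> {r \<in> {..<m}. real (dist_mult m (K * r)) < real m / (8 * real K powr (3/4))})"

lemma card_bad_slope_pairs_less:
  assumes m: "prime m" "100 \<le> m"
  shows "card (bad_slope_pairs m) < card ({..<m div 2} \<times> {..<m})"
proof -
  define \<beta> where "\<beta> K = real m / (8 * real K powr (3/4))" for K
  define X1 where "X1 K = {t \<in> {..<m div 2}. real (dist_mult m (K * (2 * t + 1))) < \<beta> K}" for K
  define X2 where "X2 K = {r \<in> {..<m}. real (dist_mult m (K * id r)) < \<beta> K}" for K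
  have \<beta>: "0 \<le> \<beta> K" for K
    unfolding \<beta>_def by simp
  have X1: "real (card (X1 K)) \<le> 2 * \<beta> K + 2" and X2: "real (card (X2 K)) \<le> 2 * \<beta> K + 2"
    if "K \<in> {1..<m}" for K
    unfolding X1_def X2_def
    by (rule card_dist_mult_mult_less[OF m(1) that \<beta>]; auto simp: inj_on_def)+
  have "bad_slope_pairs m = (\<Union>K\<in>{1..<m}. X1 K \<times> X2 K)"
    unfolding bad_slope_pairs_def X1_def X2_def \<beta>_def by simp
  then have "real (card (bad_slope_pairs m)) \<le> (\<Sum>K\<in>{1..<m}. real (card (X1 K)) * real (card (X2 K)))"
    using card_UN_le[of "{1..<m}" "\<lambda>K. X1 K \<times> X2 K"]
    by (simp add: card_cartesian_product flip: of_nat_sum of_nat_mult)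
  also have "\<dots> \<le> (\<Sum>K\<in>{1..<m}. (2 * \<beta> K + 2)\<^sup>2)"
    using X1 X2 \<beta> by (intro sum_mono) (simp add: power2_eq_square mult_mono)
  also have "\<dots> \<le> 3 * (real m)\<^sup>2 / 8 + 8 * real m"
    unfolding \<beta>_def using m(2) by (intro sum_threshold_squares_le) simp
  also have "\<dots> < (real m - 1) / 2 * real m"
    using m(2) by (simp add: power2_eq_square field_simps)
  also have "\<dots> \<le> real (card ({..<m div 2} \<times> {..<m}))"
  proof -
    have "real m \<le> real (2 * (m div 2) + 1)"
      unfolding of_nat_le_iff by presburger
    then have "(real m - 1) / 2 * real m \<le> real (m div 2) * real m"
      by (intro mult_right_mono) simp_all
    then show ?thesis
      by (simp add: card_cartesian_product)
  qed
  finally show ?thesis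
    by (simp only: of_nat_less_iff)
qed

lemma good_slopes_exists:
  assumes m: "prime m" "100 \<le> m"
  shows "\<exists>p r. good_slopes m p r"
proof -
  have "finite (bad_slope_pairs m)"
    unfolding bad_slope_pairs_def by auto
  then have "\<not> {..<m div 2} \<times> {..<m} \<subseteq> bad_slope_pairs m"
    using card_bad_slope_pairs_less[OF m] card_mono[of "bad_slope_pairs m" "{..<m div 2} \<times> {..<m}"]
    by linarith
  then obtain t r where tr: "t < m div 2" "r < m" "(t, r) \<notin> bad_slope_pairs m"
    by auto
  have "good_slopes m (2 * t + 1) r"
    unfolding good_slopes_def
  proof (intro conjI ballI)
    fix K assume "K \<in> {1..<m}"
    then have "\<not> (real (dist_mult m (K * (2 * t + 1))) < real m / (8 * real K powr (3/4))
                \<and> real (dist_mult m (K * r)) < real m / (8 * real K powr (3/4)))"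
      using tr unfolding bad_slope_pairs_def by blast
    then have "real m / (8 * real K powr (3/4)) \<le> real (dist_mult m (K * (2 * t + 1)))
               \<or> real m / (8 * real K powr (3/4)) \<le> real (dist_mult m (K * r))"
      by linarith
    then show "real m / (8 * real K powr (3/4))
                 \<le> real (max (dist_mult m (K * (2 * t + 1))) (dist_mult m (K * r)))"
      unfolding of_nat_max by linarith
  qed (use m tr in auto)
  then show ?thesis
    by blast
qed

section \<open>Construction of the word\<close>

definition next_params :: "nat \<Rightarrow> nat \<times> nat \<times> nat" where
  "next_params B = (SOME (m, p, r). B < m \<and> good_slopes m p r)"

lemma next_params_good:
  obtains m p r where "next_params B = (m, p, r)" "B < m" "good_slopes m p r"
proof -
  obtain m where "prime m" "max B 100 < m"
    using bigger_prime by blast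
  then obtain p r where "B < m" "good_slopes m p r"
    using good_slopes_exists by fastforce
  then have "\<exists>x. case x of (m, p, r) \<Rightarrow> B < m \<and> good_slopes m p r"
    by auto
  then have "case next_params B of (m, p, r) \<Rightarrow> B < m \<and> good_slopes m p r"
    unfolding next_params_def by (rule someI_ex)
  then show ?thesis
    using that by (auto split: prod.splits)
qed

definition region_exp :: "real \<Rightarrow> nat \<Rightarrow> nat" where
  "region_exp \<theta> m = max 1 (nat \<lfloor>2 * \<theta> * real m\<rfloor>)"

(* Region j occupies [region_start \<theta> j, region_start \<theta> (Suc j)) and consists of region_exp \<theta> m
   periods, of length 2 m, of region_word \<theta> j, where m = region_modulus \<theta> j. *)
fun region_start :: "real \<Rightarrow> nat \<Rightarrow> nat" where
  "region_start \<theta> 0 = 0"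
| "region_start \<theta> (Suc j) =
     (let m = fst (next_params (region_start \<theta> j)) in region_start \<theta> j + 2 * m * region_exp \<theta> m)"

definition region_modulus :: "real \<Rightarrow> nat \<Rightarrow> nat" where
  "region_modulus \<theta> j = fst (next_params (region_start \<theta> j))"

definition region_word :: "real \<Rightarrow> nat \<Rightarrow> nat \<Rightarrow> nat" where
  "region_word \<theta> j = (case next_params (region_start \<theta> j) of (m, p, r) \<Rightarrow> interleaved_word m p r)"

lemma region_start_Suc:
  "region_start \<theta> (Suc j) = region_start \<theta> j + 2 * region_modulus \<theta> j * region_exp \<theta> (region_modulus \<theta> j)"
  by (simp add: region_modulus_def Let_def)

declare region_start.simps(2) [simp del]

lemma region_params:
  obtains p r where "good_slopes (region_modulus \<theta> j) p r"
    "region_word \<theta> j = interleaved_word (region_modulus \<theta> j) p r"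
    "region_start \<theta> j < region_modulus \<theta> j"
  using next_params_good[of "region_start \<theta> j"] unfolding region_modulus_def region_word_def
  by (metis fst_conv prod.simps(2))

lemma region_start_less_modulus: "region_start \<theta> j < region_modulus \<theta> j"
  by (metis region_params)

lemma region_modulus_pos: "0 < region_modulus \<theta> j"
  using region_start_less_modulus[of \<theta> j] by simp

lemma region_exp_ge_1: "1 \<le> region_exp \<theta> m"
  unfolding region_exp_def by simp

lemma region_exp_le: "0 \<le> \<theta> \<Longrightarrow> real (region_exp \<theta> m) \<le> 1 + 2 * \<theta> * real m"
  unfolding region_exp_def by (simp add: max_def) linarith

lemma region_exp_ge: "2 * \<theta> * real m - 1 \<le> real (region_exp \<theta> m)"
  unfolding region_exp_def by (simp add: max_def) linarith

lemma region_start_add_modulus: "region_start \<theta> j + 2 * region_modulus \<theta> j \<le> region_start \<theta> (Suc j)"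
  using region_exp_ge_1[of \<theta> "region_modulus \<theta> j"] unfolding region_start_Suc by simp

lemma strict_mono_region_start: "strict_mono (region_start \<theta>)"
proof (rule strict_monoI_Suc)
  fix j
  show "region_start \<theta> j < region_start \<theta> (Suc j)"
    using region_start_add_modulus[of \<theta> j] region_modulus_pos[of \<theta> j] by linarith
qed

lemma strict_mono_region_modulus: "strict_mono (region_modulus \<theta>)"
proof (rule strict_monoI_Suc)
  fix j
  show "region_modulus \<theta> j < region_modulus \<theta> (Suc j)"
    using region_start_add_modulus[of \<theta> j] region_start_less_modulus[of \<theta> "Suc j"] by linarith
qed

definition region_of :: "real \<Rightarrow> nat \<Rightarrow> nat" where
  "region_of \<theta> x = (LEAST j. x < region_start \<theta> (Suc j))"

lemma region_of_bounds:
  "region_start \<theta> (region_of \<theta> x) \<le> x \<and> x < region_start \<theta> (Suc (region_of \<theta> x))"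
proof
  have "x < region_start \<theta> (Suc x)"
    using strict_mono_imp_increasing[OF strict_mono_region_start[of \<theta>], of "Suc x"] by simp
  then show "x < region_start \<theta> (Suc (region_of \<theta> x))"
    unfolding region_of_def by (rule LeastI)
  show "region_start \<theta> (region_of \<theta> x) \<le> x"
  proof (cases "region_of \<theta> x")
    case (Suc j)
    then have "\<not> x < region_start \<theta> (Suc j)"
      using not_less_Least[of j "\<lambda>j. x < region_start \<theta> (Suc j)"] unfolding region_of_def by simp
    then show ?thesis
      using Suc by simp
  qed simp
qed

lemma region_of_eq:
  assumes "region_start \<theta> j \<le> x" "x < region_start \<theta> (Suc j)"
  shows "region_of \<theta> x = j"
  using assms region_of_bounds[of \<theta> x] strict_mono_less_eq[OF strict_mono_region_start]
  by (metis Suc_le_eq le_less_trans linorder_neqE_nat not_less)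

definition critical_word :: "real \<Rightarrow> nat \<Rightarrow> nat" where
  "critical_word \<theta> x = region_word \<theta> (region_of \<theta> x) x"

lemma critical_word_range: "range (critical_word \<theta>) \<subseteq> {0, 1, 2}"
proof (rule image_subsetI)
  fix x
  obtain p r where "good_slopes (region_modulus \<theta> (region_of \<theta> x)) p r"
    "region_word \<theta> (region_of \<theta> x) = interleaved_word (region_modulus \<theta> (region_of \<theta> x)) p r"
    by (rule region_params)
  then show "critical_word \<theta> x \<in> {0, 1, 2}"
    using interleaved_word_range[of p "region_modulus \<theta> (region_of \<theta> x)" r x]
    unfolding critical_word_def good_slopes_def by simp
qed

lemma factor_critical_word:
  assumes "region_start \<theta> j \<le> s" "s + L \<le> region_start \<theta> (Suc j)"
  shows "factor (critical_word \<theta>) s L = factor (region_word \<theta> j) s L"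
  unfolding factor_def critical_word_def
proof (rule map_cong[OF refl])
  fix x assume "x \<in> set [s..<s + L]"
  then have "region_of \<theta> x = j"
    using assms by (intro region_of_eq) auto
  then show "region_word \<theta> (region_of \<theta> x) x = region_word \<theta> j x"
    by simp
qed

section \<open>Exponents of abelian powers in the word\<close>

definition region_power_bound :: "real \<Rightarrow> nat \<Rightarrow> nat \<Rightarrow> real" where
  "region_power_bound \<theta> M j =
     (if 2 * region_modulus \<theta> j dvd M then \<theta> * real M + 1 else 16 * real M powr (3/4) + 1)"

lemma region_power_bound_nonneg: "0 \<le> \<theta> \<Longrightarrow> 0 \<le> region_power_bound \<theta> M j"
  unfolding region_power_bound_def by simp

lemma region_power_bound_le:
  "0 \<le> \<theta> \<Longrightarrow> region_power_bound \<theta> M j \<le> \<theta> * real M + 16 * real M powr (3/4) + 1"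
  unfolding region_power_bound_def by simp

lemma abelian_power_in_region_le:
  assumes \<theta>: "0 \<le> \<theta>" and M: "0 < M" and pw: "abelian_power_at (critical_word \<theta>) i M e"
    and start: "region_start \<theta> j \<le> i" and stop: "i + e * M \<le> region_start \<theta> (Suc j)"
  shows "real e \<le> region_power_bound \<theta> M j"
proof -
  let ?m = "region_modulus \<theta> j"
  obtain p r where good: "good_slopes ?m p r" and word: "region_word \<theta> j = interleaved_word ?m p r"
    by (rule region_params)
  have "factor (critical_word \<theta>) (i + k * M) M = factor (region_word \<theta> j) (i + k * M) M" if "k < e" for k
  proof (rule factor_critical_word)
    have "(k + 1) * M \<le> e * M"
      using that by (intro mult_right_mono) auto
    then show "i + k * M + M \<le> region_start \<theta> (Suc j)"
      using stop by simp
  qed (use start in simp)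
  then have pw': "abelian_power_at (interleaved_word ?m p r) i M e"
    using pw abelian_power_at_cong word by metis
  show ?thesis
  proof (cases "2 * ?m dvd M")
    case True
    then have "2 * ?m \<le> M"
      using M by (simp add: dvd_imp_le)
    have "e * M \<le> 2 * ?m * region_exp \<theta> ?m"
      using start stop unfolding region_start_Suc by linarith
    then have "real e * real M \<le> 2 * real ?m * real (region_exp \<theta> ?m)"
      by (metis of_nat_le_iff of_nat_mult of_nat_numeral)
    also have "\<dots> \<le> 2 * real ?m * (1 + \<theta> * (2 * real ?m))"
      using region_exp_le[OF \<theta>, of ?m] by (intro mult_left_mono) auto
    also have "\<dots> \<le> real M * (1 + \<theta> * real M)"
      using \<open>2 * ?m \<le> M\<close> \<theta> by (intro mult_mono add_left_mono mult_left_mono) auto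
    finally have "real e \<le> 1 + \<theta> * real M"
      using M by (simp add: mult.commute)
    then show ?thesis
      using True unfolding region_power_bound_def by simp
  next
    case False
    then show ?thesis
      using interleaved_word_power_bound[OF good False pw'] unfolding region_power_bound_def by simp
  qed
qed

lemma abelian_power_before_region_start:
  assumes \<theta>: "0 \<le> \<theta>" and M: "0 < M" and pw: "abelian_power_at (critical_word \<theta>) i M e"
    and start: "i \<le> region_start \<theta> j" and stop: "i + e * M \<le> region_start \<theta> (Suc j)"
  defines "c \<equiv> (region_start \<theta> j - i) div M"
  shows c: "c * M \<le> region_start \<theta> j - i" "region_start \<theta> j - i < (c + 1) * M"
    and "real e \<le> real c + 1 + region_power_bound \<theta> M j"
    and "c * M < region_modulus \<theta> j"
    and "2 * region_modulus \<theta> j dvd M \<Longrightarrow> c = 0"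
proof -
  have "c * M + (region_start \<theta> j - i) mod M = region_start \<theta> j - i"
    unfolding c_def by (rule div_mult_mod_eq)
  moreover have "(region_start \<theta> j - i) mod M < M"
    using M by simp
  ultimately show c: "c * M \<le> region_start \<theta> j - i" "region_start \<theta> j - i < (c + 1) * M"
    by simp_all
  show "real e \<le> real c + 1 + region_power_bound \<theta> M j"
  proof (cases "c + 1 \<le> e")
    case True
    have "real (e - (c + 1)) \<le> region_power_bound \<theta> M j"
    proof (rule abelian_power_in_region_le[OF \<theta> M abelian_power_at_subrange[OF pw True le_refl]])
      show "region_start \<theta> j \<le> i + (c + 1) * M"
        using c(2) by linarith
      have "(c + 1) * M + (e - (c + 1)) * M = e * M"
        using True by (metis add_mult_distrib le_add_diff_inverse)
      then show "i + (c + 1) * M + (e - (c + 1)) * M \<le> region_start \<theta> (Suc j)"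
        using stop by linarith
    qed
    then show ?thesis
      using True by (simp add: of_nat_diff)
  next
    case False
    then show ?thesis
      using region_power_bound_nonneg[OF \<theta>, of M j] by simp
  qed
  show small: "c * M < region_modulus \<theta> j"
    using c(1) region_start_less_modulus[of \<theta> j] by linarith
  show "c = 0" if "2 * region_modulus \<theta> j dvd M"
  proof -
    have "2 * region_modulus \<theta> j \<le> M"
      using that M by (simp add: dvd_imp_le)
    then have "c * M < 1 * M"
      using small by linarith
    then show "c = 0"
      by simp
  qed
qed

lemma abelian_power_filling_region_le:
  assumes \<theta>: "0 \<le> \<theta>" and M: "0 < M" and pw: "abelian_power_at (critical_word \<theta>) i M e"
    and stop: "i + e * M \<le> region_start \<theta> (Suc j)"
    and filled: "region_start \<theta> (Suc j) - i < (e + 1) * M"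
  shows "real e \<le> \<theta> * M + 32 * real M powr (3/4) + 4"
proof (cases "region_start \<theta> j \<le> i")
  case True
  then show ?thesis
    using abelian_power_in_region_le[OF \<theta> M pw True stop] region_power_bound_le[OF \<theta>, of M j]
      powr_ge_zero[of "real M" "3/4"] by linarith
next
  case False
  define c where "c = (region_start \<theta> j - i) div M"
  have "i \<le> region_start \<theta> j"
    using False by simp
  note before = abelian_power_before_region_start[OF \<theta> M pw this stop, folded c_def]
  show ?thesis
  proof (cases "2 * region_modulus \<theta> j dvd M")
    case True
    have "real e \<le> 2 + \<theta> * M"
      using before(3,5) True unfolding region_power_bound_def by simp
    then show ?thesis
      using powr_ge_zero[of "real M" "3/4"] by linarith
  next
    case not_dvd: False
    \<comment> \<open>region j is twice as long as everything before it, so at most a third of the blocks lie before it\<close>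
    have "3 * c * M < (e + 1) * M"
      using before(1,4) region_start_add_modulus[of \<theta> j] filled False by linarith
    then have "3 * c < e + 1"
      using mult_less_cancel2 by blast
    moreover have "real e \<le> real c + 1 + (16 * real M powr (3/4) + 1)"
      using before(3) not_dvd unfolding region_power_bound_def by simp
    moreover have "0 \<le> \<theta> * M" "0 \<le> real M powr (3/4)"
      using \<theta> by simp_all
    ultimately show ?thesis
      by linarith
  qed
qed

lemma abelian_power_exponent_le:
  assumes \<theta>: "0 \<le> \<theta>" and M: "0 < M" and e: "0 < e"
    and pw: "abelian_power_at (critical_word \<theta>) i M e"
  shows "real e \<le> \<theta> * M + 48 * real M powr (3/4) + 8"
proof -
  define j where "j = region_of \<theta> (i + e * M - 1)"
  have "0 < e * M"
    using e M by simp
  then have stop: "i + e * M \<le> region_start \<theta> (Suc j)" and reach: "region_start \<theta> j < i + e * M"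
    using region_of_bounds[of \<theta> "i + e * M - 1"] unfolding j_def by linarith+
  show ?thesis
  proof (cases "region_start \<theta> j \<le> i")
    case True
    then show ?thesis
      using abelian_power_in_region_le[OF \<theta> M pw True stop] region_power_bound_le[OF \<theta>, of M j]
        powr_ge_zero[of "real M" "3/4"] by linarith
  next
    case False
    define c where "c = (region_start \<theta> j - i) div M"
    have "i \<le> region_start \<theta> j"
      using False by simp
    note before = abelian_power_before_region_start[OF \<theta> M pw this stop, folded c_def]
    show ?thesis
    proof (cases "2 * region_modulus \<theta> j dvd M")
      case True
      have "real e \<le> 2 + \<theta> * M"
        using before(3,5) True unfolding region_power_bound_def by simp
      then show ?thesis
        using powr_ge_zero[of "real M" "3/4"] by linarith
    next
      case not_dvd: False
      obtain j' where j': "j = Suc j'"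
        using False by (cases j) auto
      have "c * M < e * M"
        using before(1) reach \<open>0 < e * M\<close> by linarith
      then have "c \<le> e"
        by simp
      then have "abelian_power_at (critical_word \<theta>) i M c"
        using abelian_power_at_subrange[OF pw, of 0 c] by simp
      then have "real c \<le> \<theta> * M + 32 * real M powr (3/4) + 4"
        using before(1,2) False unfolding j' by (intro abelian_power_filling_region_le[OF \<theta> M]) auto
      moreover have "real e \<le> real c + 1 + (16 * real M powr (3/4) + 1)"
        using before(3) not_dvd unfolding region_power_bound_def by simp
      ultimately show ?thesis
        by linarith
    qed
  qed
qed

lemma abelian_period_exp_critical_word_le:
  assumes "0 \<le> \<theta>" "0 < M"
  shows "abelian_period_exp (critical_word \<theta>) M / ereal (real M)
           \<le> ereal (\<theta> + (48 * real M powr (3/4) + 8) / real M)"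
proof -
  have "abelian_period_exp (critical_word \<theta>) M \<le> ereal (\<theta> * M + 48 * real M powr (3/4) + 8)"
    unfolding abelian_period_exp_def
  proof (rule SUP_least)
    fix e assume "e \<in> {e. has_abelian_power (critical_word \<theta>) M e}"
    then show "ereal (real e) \<le> ereal (\<theta> * M + 48 * real M powr (3/4) + 8)"
      using abelian_power_exponent_le[OF assms] unfolding has_abelian_power_iff by auto
  qed
  then have "abelian_period_exp (critical_word \<theta>) M / ereal (real M)
               \<le> ereal (\<theta> * M + 48 * real M powr (3/4) + 8) / ereal (real M)"
    using assms(2) by (intro ereal_divide_right_mono) simp_all
  also have "\<dots> = ereal ((\<theta> * M + 48 * real M powr (3/4) + 8) / real M)"
    using assms(2) by simp
  also have "(\<theta> * M + 48 * real M powr (3/4) + 8) / real M = \<theta> + (48 * real M powr (3/4) + 8) / real M"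
    using assms(2) by (simp add: field_simps)
  finally show ?thesis .
qed

lemma critical_word_has_abelian_power:
  "has_abelian_power (critical_word \<theta>) (2 * region_modulus \<theta> j) (region_exp \<theta> (region_modulus \<theta> j))"
proof -
  let ?m = "region_modulus \<theta> j" and ?s = "region_start \<theta> j"
  obtain p r where "region_word \<theta> j = interleaved_word ?m p r"
    by (rule region_params)
  then have periodic: "region_word \<theta> j (x + 2 * ?m) = region_word \<theta> j x" for x
    using interleaved_word_periodic[OF region_modulus_pos] by simp
  have "factor (critical_word \<theta>) (?s + k * (2 * ?m)) (2 * ?m) = factor (region_word \<theta> j) ?s (2 * ?m)"
    if "k < region_exp \<theta> ?m" for k
  proof -
    have "(k + 1) * (2 * ?m) \<le> region_exp \<theta> ?m * (2 * ?m)"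
      using that by (intro mult_right_mono) auto
    then have "factor (critical_word \<theta>) (?s + k * (2 * ?m)) (2 * ?m)
                 = factor (region_word \<theta> j) (?s + k * (2 * ?m)) (2 * ?m)"
      by (intro factor_critical_word) (auto simp: region_start_Suc algebra_simps)
    also have "\<dots> = factor (region_word \<theta> j) ?s (2 * ?m)"
    proof -
      have "region_word \<theta> j (?s + k * (2 * ?m) + t) = region_word \<theta> j (?s + t)" for t
        using periodic_add_mult[of "region_word \<theta> j" "2 * ?m" "?s + t" k, OF periodic]
        by (simp only: ac_simps)
      then show ?thesis
        unfolding factor_conv_map by simp
    qed
    finally show ?thesis .
  qed
  then have "abelian_power_at (critical_word \<theta>) ?s (2 * ?m) (region_exp \<theta> ?m)"
    unfolding abelian_power_at_def abelian_equiv_def by simp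
  then show ?thesis
    unfolding has_abelian_power_iff
    using region_modulus_pos[of \<theta> j] region_exp_ge_1[of \<theta> ?m] by auto
qed

lemma abelian_period_exp_critical_word_ge:
  "ereal (\<theta> - 1 / (2 * real (region_modulus \<theta> j)))
     \<le> abelian_period_exp (critical_word \<theta>) (2 * region_modulus \<theta> j)
         / ereal (real (2 * region_modulus \<theta> j))"
proof -
  let ?m = "region_modulus \<theta> j"
  have m: "0 < real ?m"
    using region_modulus_pos by simp
  have "ereal (real (region_exp \<theta> ?m)) \<le> abelian_period_exp (critical_word \<theta>) (2 * ?m)"
    unfolding abelian_period_exp_def using critical_word_has_abelian_power by (intro SUP_upper) simp
  then have "ereal (real (region_exp \<theta> ?m)) / ereal (real (2 * ?m))
               \<le> abelian_period_exp (critical_word \<theta>) (2 * ?m) / ereal (real (2 * ?m))"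
    using m by (intro ereal_divide_right_mono) simp_all
  moreover have "ereal (real (region_exp \<theta> ?m)) / ereal (real (2 * ?m))
                   = ereal (real (region_exp \<theta> ?m) / (2 * real ?m))"
    using m by simp
  moreover have "\<theta> - 1 / (2 * real ?m) = (2 * \<theta> * real ?m - 1) / (2 * real ?m)"
    using m by (simp add: field_simps)
  then have "\<theta> - 1 / (2 * real ?m) \<le> real (region_exp \<theta> ?m) / (2 * real ?m)"
    using region_exp_ge[of \<theta> ?m] m by (simp add: divide_right_mono)
  ultimately show ?thesis
    by (metis ereal_less_eq(3) order_trans)
qed

lemma tendsto_region_ratio: "(\<lambda>j. \<theta> - 1 / (2 * real (region_modulus \<theta> j))) \<longlonglongrightarrow> \<theta>"
proof -
  have "((\<lambda>m::nat. \<theta> - 1 / (2 * real m)) \<longlongrightarrow> \<theta>) sequentially"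
    by real_asymp
  then show ?thesis
    by (rule filterlim_compose[OF _ filterlim_subseq[OF strict_mono_region_modulus]])
qed

section \<open>The abelian critical exponent\<close>

lemma limsup_le_if_le_tendsto:
  fixes f :: "nat \<Rightarrow> ereal"
  assumes "\<forall>\<^sub>F n in sequentially. f n \<le> ereal (g n)" and "g \<longlonglongrightarrow> l"
  shows "limsup f \<le> ereal l"
proof -
  have "limsup f \<le> limsup (\<lambda>n. ereal (g n))"
    by (rule Limsup_mono) (rule assms(1))
  also have "\<dots> = ereal l"
    by (rule lim_imp_Limsup) (simp_all add: assms(2))
  finally show ?thesis .
qed

lemma limsup_ge_if_subseq_ge:
  fixes f :: "nat \<Rightarrow> ereal"
  assumes "strict_mono \<sigma>" and "\<And>j. ereal (h j) \<le> f (\<sigma> j)" and "h \<longlonglongrightarrow> l"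
  shows "ereal l \<le> limsup f"
proof -
  have "ereal l = limsup (\<lambda>j. ereal (h j))"
    by (rule lim_imp_Limsup[symmetric]) (simp_all add: assms(3))
  also have "\<dots> \<le> limsup (f \<circ> \<sigma>)"
    by (intro Limsup_mono always_eventually allI) (simp add: assms(2))
  also have "\<dots> \<le> limsup f"
    by (rule limsup_subseq_mono[OF assms(1)])
  finally show ?thesis .
qed

theorem theorem1:
  fixes \<theta> :: real
  assumes "0 \<le> \<theta>"
  shows "\<exists>w :: nat \<Rightarrow> nat. range w \<subseteq> {0, 1, 2} \<and>
           abelian_critical_exponent w = ereal \<theta>"
proof (intro exI conjI)
  show "range (critical_word \<theta>) \<subseteq> {0, 1, 2}"
    by (rule critical_word_range)
  let ?f = "\<lambda>M. abelian_period_exp (critical_word \<theta>) M / ereal (real M)"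
  have "limsup ?f \<le> ereal \<theta>"
  proof (rule limsup_le_if_le_tendsto)
    show "\<forall>\<^sub>F M in sequentially. ?f M \<le> ereal (\<theta> + (48 * real M powr (3/4) + 8) / real M)"
      using eventually_gt_at_top[of 0] by eventually_elim (rule abelian_period_exp_critical_word_le[OF assms])
    show "(\<lambda>M. \<theta> + (48 * real M powr (3/4) + 8) / real M) \<longlonglongrightarrow> \<theta>"
      by real_asymp
  qed
  moreover have "ereal \<theta> \<le> limsup ?f"
    using strict_mono_region_modulus[of \<theta>] abelian_period_exp_critical_word_ge tendsto_region_ratio
    by (intro limsup_ge_if_subseq_ge[where \<sigma> = "\<lambda>j. 2 * region_modulus \<theta> j"]) (auto simp: strict_mono_def)
  ultimately show "abelian_critical_exponent (critical_word \<theta>) = ereal \<theta>"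
    unfolding abelian_critical_exponent_def by (rule antisym)
qed

end
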